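(* Let $G\subsetneq\mathbb{R}^n$ be a domain. For all $z_1,z_2\in G$ and all $p>r\ge1$, \[ b_{G,r}(z_1,z_2)\le b_{G,p}(z_1,z_2)\le 2^{\frac1r-\frac1p}\,b_{G,r}(z_1,z_2). \] In particular, for $p\ge1$, $s_G(z_1,z_2)\le b_{G,p}(z_1,z_2)\le 2^{1-1/p}s_G(z_1,z_2)$. Moreover, if $n=2$, then for every $p\ge1$, \[ \sup\{b_{G,p}(z_1,z_2):z_1,z_2\in G\}=2^{1-1/p}. \]
   Context: For a domain $G\subsetneq\mathbb{R}^n$, $p\ge1$ and $z_1,z_2\in G$, $b_{G,p}(z_1,z_2)=\sup_{z\in\partial G}\frac{|z_1-z_2|}{\sqrt[p]{|z_1-z|^p+|z-z_2|^p}}$, and $s_G=b_{G,1}$, i.e. $s_G(z_1,z_2)=\sup_{z\in\partial G}\frac{|z_1-z_2|}{|z_1-z|+|z-z_2|}$. *)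

theory Defs
  imports "HOL-Analysis.Analysis"
begin

definition b_fun :: "'a::euclidean_space set \<Rightarrow> real \<Rightarrow> 'a \<Rightarrow> 'a \<Rightarrow> real" where
  "b_fun G p z1 z2 = (SUP z\<in>frontier G.
      norm (z1 - z2) / (norm (z1 - z) powr p + norm (z - z2) powr p) powr (1 / p))"

definition s_fun :: "'a::euclidean_space set \<Rightarrow> 'a \<Rightarrow> 'a \<Rightarrow> real" where
  "s_fun G = b_fun G 1"

end

theory Submission
  imports Defs
begin

(* For a, b > 0 the quantity (a^p + b^p)^(1/p) decreases in p, and convexity of x |-> x^(p/r)
   bounds it below by 2^(1/p - 1/r) (a^r + b^r)^(1/r). With a = |z1 - z|, b = |z - z2| this
   compares the ratios defining b_{G,r} and b_{G,p} at every boundary point z, hence their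
   suprema; the triangle inequality gives s_G <= 1 and so b_{G,p} <= 2^(1 - 1/p).
   For sharpness, let a ball of radius d in G touch the boundary at z, with inner unit normal n
   and a unit vector u orthogonal to n (this needs dimension at least 2). The points
   z +- t u + (t^2/d) n lie in the ball, are equidistant from z, and their ratio at z equals
   2^(1 - 1/p) / sqrt (1 + (t/d)^2), which tends to 2^(1 - 1/p) as t -> 0. *)

lemma lp_norm2_antimono:
  fixes a b r p :: real
  assumes "0 < a" "0 < b" "0 < r" "r \<le> p"
  shows "(a powr p + b powr p) powr (1/p) \<le> (a powr r + b powr r) powr (1/r)"
proof -
  define S where "S = a powr r + b powr r"
  define q where "q = p / r"
  have S: "S > 0"
    unfolding S_def using assms by (intro add_pos_pos) auto
  have q: "q \<ge> 1" and p: "p > 0"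
    using assms by (auto simp: q_def)
  have "x powr q \<le> x" if "0 \<le> x" "x \<le> 1" for x
    using powr_mono'[OF q that] that by simp
  then have "(a powr r / S) powr q + (b powr r / S) powr q \<le> a powr r / S + b powr r / S"
    using S by (intro add_mono) (auto simp: S_def)
  also have "\<dots> = 1"
    using S by (simp add: S_def add_divide_distrib[symmetric])
  also have "(a powr r / S) powr q + (b powr r / S) powr q = (a powr p + b powr p) / S powr q"
    using assms by (simp add: powr_divide powr_powr q_def add_divide_distrib)
  finally have "a powr p + b powr p \<le> S powr q"
    using S by simp
  then have "(a powr p + b powr p) powr (1/p) \<le> (S powr q) powr (1/p)"
    using p by (intro powr_mono2) auto
  also have "\<dots> = S powr (1/r)"
    using p assms by (simp add: powr_powr q_def)
  finally show ?thesis
    by (simp add: S_def)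
qed

lemma lp_norm2_ge:
  fixes a b r p :: real
  assumes "0 < a" "0 < b" "0 < r" "r \<le> p"
  shows "2 powr (1/p - 1/r) * (a powr r + b powr r) powr (1/r) \<le> (a powr p + b powr p) powr (1/p)"
proof -
  define x where "x = a powr r"
  define y where "y = b powr r"
  define q where "q = p / r"
  have q: "q \<ge> 1" and p: "p > 0" and xy: "x > 0" "y > 0"
    using assms by (auto simp: q_def x_def y_def)
  have "((1 - 1/2) *\<^sub>R x + (1/2) *\<^sub>R y) powr q \<le> (1 - 1/2) * x powr q + (1/2) * y powr q"
    by (rule convex_onD[OF powr_convex[OF q]]) (use xy in auto)
  moreover have "x powr q = a powr p" "y powr q = b powr p"
    using assms by (simp_all add: x_def y_def powr_powr q_def)
  ultimately have "((x + y) / 2) powr q \<le> (a powr p + b powr p) / 2"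
    by (simp add: field_simps)
  then have "(((x + y) / 2) powr q) powr (1/p) \<le> ((a powr p + b powr p) / 2) powr (1/p)"
    using p xy by (intro powr_mono2) auto
  moreover have "(((x + y) / 2) powr q) powr (1/p) = (x + y) powr (1/r) / 2 powr (1/r)"
    using p assms xy by (simp add: powr_powr q_def powr_divide)
  moreover have "((a powr p + b powr p) / 2) powr (1/p) = (a powr p + b powr p) powr (1/p) / 2 powr (1/p)"
    using assms by (simp add: powr_divide)
  ultimately have "(x + y) powr (1/r) * 2 powr (1/p) / 2 powr (1/r) \<le> (a powr p + b powr p) powr (1/p)"
    by (simp add: field_simps)
  then show ?thesis
    by (simp add: powr_diff x_def y_def mult.commute)
qed

lemma lp_norm2_pos:
  fixes a b r :: real
  assumes "0 < a" "0 < b"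
  shows "0 < (a powr r + b powr r) powr (1/r)"
proof -
  have "0 < a powr r + b powr r"
    using assms by (intro add_pos_pos) auto
  then show ?thesis
    by simp
qed

definition b_ratio :: "real \<Rightarrow> 'a::euclidean_space \<Rightarrow> 'a \<Rightarrow> 'a \<Rightarrow> real" where
  "b_ratio p z1 z2 z = norm (z1 - z2) / (norm (z1 - z) powr p + norm (z - z2) powr p) powr (1 / p)"

lemma b_fun_eq_SUP_b_ratio: "b_fun G p z1 z2 = (SUP z\<in>frontier G. b_ratio p z1 z2 z)"
  by (simp add: b_fun_def b_ratio_def)

lemma b_ratio_mono:
  assumes "0 < r" "r \<le> p" "z \<noteq> z1" "z \<noteq> z2"
  shows "b_ratio r z1 z2 z \<le> b_ratio p z1 z2 z"
proof -
  have a: "0 < norm (z1 - z)" and b: "0 < norm (z - z2)"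
    using assms by auto
  show ?thesis
    unfolding b_ratio_def
    by (rule frac_le[OF norm_ge_zero order_refl lp_norm2_pos[OF a b] lp_norm2_antimono[OF a b assms(1,2)]])
qed

lemma b_ratio_le_powr2:
  assumes "0 < r" "r \<le> p" "z \<noteq> z1" "z \<noteq> z2"
  shows "b_ratio p z1 z2 z \<le> 2 powr (1/r - 1/p) * b_ratio r z1 z2 z"
proof -
  have a: "0 < norm (z1 - z)" and b: "0 < norm (z - z2)"
    using assms by auto
  define Dr where "Dr = (norm (z1 - z) powr r + norm (z - z2) powr r) powr (1/r)"
  have "0 < 2 powr (1/p - 1/r) * Dr"
    using lp_norm2_pos[OF a b] by (simp add: Dr_def)
  then have "b_ratio p z1 z2 z \<le> norm (z1 - z2) / (2 powr (1/p - 1/r) * Dr)"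
    unfolding b_ratio_def Dr_def
    by (rule frac_le[OF norm_ge_zero order_refl _ lp_norm2_ge[OF a b assms(1,2)]])
  also have "\<dots> = 2 powr (1/r - 1/p) * b_ratio r z1 z2 z"
  proof -
    have "2 powr (1/r - 1/p) = 1 / 2 powr (1/p - 1/r)"
      using powr_minus_divide[of 2 "1/p - 1/r"] by simp
    then show ?thesis
      by (simp add: b_ratio_def Dr_def)
  qed
  finally show ?thesis .
qed

lemma b_ratio_one_le_1: "b_ratio 1 z1 z2 z \<le> 1"
proof -
  define D where "D = norm (z1 - z) + norm (z - z2)"
  have "norm (z1 - z2) / D \<le> D / D"
    using norm_triangle_ineq[of "z1 - z" "z - z2"] by (intro divide_right_mono) (auto simp: D_def)
  also have "\<dots> \<le> 1"
    by simp
  finally show ?thesis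
    by (simp add: b_ratio_def D_def)
qed

lemma b_ratio_le_2_powr:
  assumes "1 \<le> p" "z \<noteq> z1" "z \<noteq> z2"
  shows "b_ratio p z1 z2 z \<le> 2 powr (1 - 1/p)"
proof -
  have "b_ratio p z1 z2 z \<le> 2 powr (1 - 1/p) * b_ratio 1 z1 z2 z"
    using b_ratio_le_powr2[of 1 p z z1 z2] assms by simp
  also have "\<dots> \<le> 2 powr (1 - 1/p)"
    using b_ratio_one_le_1[of z1 z2 z] by (simp add: mult_left_le)
  finally show ?thesis .
qed

lemma b_ratio_frontier_le_2_powr:
  assumes "open G" "z1 \<in> G" "z2 \<in> G" "z \<in> frontier G" "1 \<le> p"
  shows "b_ratio p z1 z2 z \<le> 2 powr (1 - 1/p)"
proof -
  have "z \<notin> G"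
    using assms(1,4) frontier_disjoint_eq[of G] by blast
  then show ?thesis
    using assms by (intro b_ratio_le_2_powr) auto
qed

lemma bdd_above_b_ratio_frontier:
  assumes "open G" "z1 \<in> G" "z2 \<in> G" "1 \<le> p"
  shows "bdd_above (b_ratio p z1 z2 ` frontier G)"
  using b_ratio_frontier_le_2_powr[OF assms(1-3) _ assms(4)] by (intro bdd_aboveI2)

lemma b_fun_le_2_powr:
  fixes G :: "'a::euclidean_space set"
  assumes "open G" "G \<noteq> UNIV" "z1 \<in> G" "z2 \<in> G" "1 \<le> p"
  shows "b_fun G p z1 z2 \<le> 2 powr (1 - 1/p)"
  unfolding b_fun_eq_SUP_b_ratio
  using assms frontier_not_empty[of G]
  by (intro cSUP_least b_ratio_frontier_le_2_powr) auto

lemma b_fun_mono: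
  fixes G :: "'a::euclidean_space set"
  assumes "open G" "G \<noteq> UNIV" "z1 \<in> G" "z2 \<in> G" "1 \<le> r" "r \<le> p"
  shows "b_fun G r z1 z2 \<le> b_fun G p z1 z2"
  unfolding b_fun_eq_SUP_b_ratio
proof (rule cSUP_mono)
  show "frontier G \<noteq> {}"
    using assms frontier_not_empty[of G] by auto
  show "bdd_above (b_ratio p z1 z2 ` frontier G)"
    using assms by (intro bdd_above_b_ratio_frontier) auto
  fix z assume "z \<in> frontier G"
  moreover have "z \<notin> G"
    using assms(1) frontier_disjoint_eq[of G] \<open>z \<in> frontier G\<close> by blast
  ultimately show "\<exists>z'\<in>frontier G. b_ratio r z1 z2 z \<le> b_ratio p z1 z2 z'"
    using assms b_ratio_mono[of r p z z1 z2] by force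
qed

lemma b_fun_le_powr2:
  fixes G :: "'a::euclidean_space set"
  assumes "open G" "G \<noteq> UNIV" "z1 \<in> G" "z2 \<in> G" "1 \<le> r" "r \<le> p"
  shows "b_fun G p z1 z2 \<le> 2 powr (1/r - 1/p) * b_fun G r z1 z2"
  unfolding b_fun_eq_SUP_b_ratio
proof (rule cSUP_least)
  show "frontier G \<noteq> {}"
    using assms frontier_not_empty[of G] by auto
  fix z assume z: "z \<in> frontier G"
  then have "z \<notin> G"
    using assms(1) frontier_disjoint_eq[of G] by blast
  then have "b_ratio p z1 z2 z \<le> 2 powr (1/r - 1/p) * b_ratio r z1 z2 z"
    using assms by (intro b_ratio_le_powr2) auto
  also have "\<dots> \<le> 2 powr (1/r - 1/p) * (SUP z\<in>frontier G. b_ratio r z1 z2 z)"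
    using assms z by (intro mult_left_mono cSUP_upper bdd_above_b_ratio_frontier) auto
  finally show "b_ratio p z1 z2 z \<le> 2 powr (1/r - 1/p) * (SUP z\<in>frontier G. b_ratio r z1 z2 z)" .
qed

lemma ball_touching_frontier:
  fixes G :: "'a::{real_normed_vector,heine_borel} set"
  assumes "open G" "G \<noteq> {}" "G \<noteq> UNIV"
  obtains w z where "z \<in> frontier G" "ball w (dist w z) \<subseteq> G" "w \<noteq> z"
proof -
  obtain w where w: "w \<in> G"
    using assms by auto
  obtain z where z: "z \<notin> G" "\<And>y. y \<notin> G \<Longrightarrow> dist w z \<le> dist w y"
    using distance_attains_inf[of "- G" w] assms by auto
  have ball: "ball w (dist w z) \<subseteq> G"
    using z(2) by force
  have "z \<in> closure (ball w (dist w z))"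
    using w z by (subst closure_ball) auto
  then have "z \<in> closure G"
    using closure_mono[OF ball] by blast
  then have "z \<in> frontier G"
    using z(1) assms(1) by (simp add: frontier_def interior_open)
  then show ?thesis
    using that ball w z(1) by blast
qed

lemma norm_orthonormal_combination:
  assumes "orthogonal u v" "norm u = 1" "norm v = 1"
  shows "norm (a *\<^sub>R u + b *\<^sub>R v) = sqrt (a\<^sup>2 + b\<^sup>2)"
proof -
  have "orthogonal (a *\<^sub>R u) (b *\<^sub>R v)"
    using assms(1) by (simp add: orthogonal_clauses)
  then have "(norm (a *\<^sub>R u + b *\<^sub>R v))\<^sup>2 = a\<^sup>2 + b\<^sup>2"
    using assms by (simp add: norm_add_Pythagorean power_mult_distrib)
  then show ?thesis
    by (simp add: real_sqrt_unique)
qed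

lemma b_ratio_equidistant:
  assumes "0 < p" "norm (z1 - z) = A" "norm (z - z2) = A"
  shows "b_ratio p z1 z2 z = 2 powr (- 1/p) * norm (z1 - z2) / A"
proof -
  have "A \<ge> 0"
    using assms(2) by auto
  then have "(A powr p + A powr p) powr (1/p) = 2 powr (1/p) * A"
    using assms(1) by (simp add: powr_mult powr_powr flip: mult_2)
  then show ?thesis
    using assms by (simp add: b_ratio_def powr_minus_divide)
qed

lemma tangent_point_pairs:
  fixes G :: "'a::euclidean_space set"
  assumes "open G" "G \<noteq> {}" "G \<noteq> UNIV" "2 \<le> DIM('a)"
  obtains z d where "z \<in> frontier G" "0 < d"
    "\<And>t. 0 < t \<Longrightarrow> t < d \<Longrightarrow> \<exists>z1\<in>G. \<exists>z2\<in>G. norm (z1 - z2) = 2 * t \<and>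
        norm (z1 - z) = t * sqrt (1 + (t/d)\<^sup>2) \<and> norm (z - z2) = t * sqrt (1 + (t/d)\<^sup>2)"
proof -
  obtain w z where z: "z \<in> frontier G" and ball: "ball w (dist w z) \<subseteq> G" and "w \<noteq> z"
    using ball_touching_frontier[OF assms(1-3)] .
  define d where "d = dist w z"
  define n where "n = (w - z) /\<^sub>R d"
  have d: "0 < d"
    using \<open>w \<noteq> z\<close> by (simp add: d_def)
  have n: "norm n = 1" "w = z + d *\<^sub>R n"
    using d by (auto simp: n_def d_def dist_norm norm_minus_commute)
  obtain v where "v \<noteq> 0" "orthogonal n v"
    using orthogonal_to_vector_exists[OF assms(4)] by blast
  define u where "u = v /\<^sub>R norm v"
  have u: "norm u = 1" "orthogonal u n"
    using \<open>v \<noteq> 0\<close> \<open>orthogonal n v\<close> by (auto simp: u_def orthogonal_commute)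
  note norm_un = norm_orthonormal_combination[OF u(2,1) n(1)]
  have "\<exists>z1\<in>G. \<exists>z2\<in>G. norm (z1 - z2) = 2 * t \<and>
          norm (z1 - z) = t * sqrt (1 + (t/d)\<^sup>2) \<and> norm (z - z2) = t * sqrt (1 + (t/d)\<^sup>2)"
    if t: "0 < t" "t < d" for t
  proof -
    define s where "s = t\<^sup>2 / d"
    have s: "0 < s" "s < t"
      using t by (auto simp: s_def power2_eq_square field_simps)
    have inG: "z + a *\<^sub>R u + s *\<^sub>R n \<in> G" if "a\<^sup>2 = t\<^sup>2" for a
    proof -
      have "a\<^sup>2 + (s - d)\<^sup>2 = d\<^sup>2 - t\<^sup>2 + s\<^sup>2"
        using d that by (simp add: s_def power2_eq_square field_simps)
      also have "\<dots> < d\<^sup>2"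
        using s by (simp add: power_strict_mono)
      finally have "sqrt (a\<^sup>2 + (s - d)\<^sup>2) < d"
        using d real_sqrt_less_mono by fastforce
      moreover have "w - (z + a *\<^sub>R u + s *\<^sub>R n) = - (a *\<^sub>R u + (s - d) *\<^sub>R n)"
        by (simp add: n(2) algebra_simps)
      ultimately have "dist w (z + a *\<^sub>R u + s *\<^sub>R n) < d"
        by (simp only: dist_norm norm_minus_cancel norm_un)
      then show ?thesis
        using ball by (auto simp: d_def)
    qed
    have "t\<^sup>2 + s\<^sup>2 = (t * sqrt (1 + (t/d)\<^sup>2))\<^sup>2"
      using d by (simp add: s_def power2_eq_square field_simps)
    then have "sqrt (t\<^sup>2 + s\<^sup>2) = t * sqrt (1 + (t/d)\<^sup>2)"
      using t by simp
    moreover have "z + t *\<^sub>R u + s *\<^sub>R n - z = t *\<^sub>R u + s *\<^sub>R n"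
      and "z - (z + (- t) *\<^sub>R u + s *\<^sub>R n) = t *\<^sub>R u + (- s) *\<^sub>R n"
      and "(z + t *\<^sub>R u + s *\<^sub>R n) - (z + (- t) *\<^sub>R u + s *\<^sub>R n) = 2 *\<^sub>R (t *\<^sub>R u)"
      by (simp_all only: scaleR_2) (simp_all add: algebra_simps)
    ultimately show ?thesis
      using inG[of t] inG[of "- t"] norm_un[of t s] norm_un[of t "- s"] t u(1)
      by (intro bexI[of _ "z + t *\<^sub>R u + s *\<^sub>R n"] bexI[of _ "z + (- t) *\<^sub>R u + s *\<^sub>R n"]) auto
  qed
  then show ?thesis
    using that z d by blast
qed

lemma SUP_b_fun_eq_2_powr:
  fixes G :: "'a::euclidean_space set"
  assumes "open G" "G \<noteq> {}" "G \<noteq> UNIV" "2 \<le> DIM('a)" "1 \<le> p"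
  shows "(SUP zz\<in>G \<times> G. b_fun G p (fst zz) (snd zz)) = 2 powr (1 - 1/p)"
    (is "?S = ?c")
proof (rule antisym)
  show "?S \<le> ?c"
    using assms b_fun_le_2_powr[OF assms(1,3) _ _ assms(5)] by (intro cSUP_least) auto
  obtain z d where z: "z \<in> frontier G" and d: "0 < d"
    and pairs: "\<And>t. 0 < t \<Longrightarrow> t < d \<Longrightarrow> \<exists>z1\<in>G. \<exists>z2\<in>G. norm (z1 - z2) = 2 * t \<and>
        norm (z1 - z) = t * sqrt (1 + (t/d)\<^sup>2) \<and> norm (z - z2) = t * sqrt (1 + (t/d)\<^sup>2)"
    using tangent_point_pairs[OF assms(1-4)] by blast
  have bdd: "bdd_above ((\<lambda>zz. b_fun G p (fst zz) (snd zz)) ` (G \<times> G))"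
    using b_fun_le_2_powr[OF assms(1,3) _ _ assms(5)] by (intro bdd_aboveI2) auto
  have lower: "?c / sqrt (1 + (t/d)\<^sup>2) \<le> ?S" if t: "0 < t" "t < d" for t
  proof -
    obtain z1 z2 where "z1 \<in> G" "z2 \<in> G" and norms: "norm (z1 - z2) = 2 * t"
      "norm (z1 - z) = t * sqrt (1 + (t/d)\<^sup>2)" "norm (z - z2) = t * sqrt (1 + (t/d)\<^sup>2)"
      using pairs[OF t] by blast
    have "?c / sqrt (1 + (t/d)\<^sup>2) = b_ratio p z1 z2 z"
      using assms(5) t
      by (simp add: b_ratio_equidistant[OF _ norms(2,3)] norms(1) powr_diff powr_minus_divide)
    also have "\<dots> \<le> b_fun G p z1 z2"
      unfolding b_fun_eq_SUP_b_ratio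
      using assms \<open>z1 \<in> G\<close> \<open>z2 \<in> G\<close> by (intro cSUP_upper[OF z] bdd_above_b_ratio_frontier) auto
    also have "\<dots> \<le> ?S"
      using cSUP_upper[OF _ bdd, of "(z1, z2)"] \<open>z1 \<in> G\<close> \<open>z2 \<in> G\<close> by simp
    finally show ?thesis .
  qed
  have "((\<lambda>t. ?c / sqrt (1 + (t/d)\<^sup>2)) \<longlongrightarrow> ?c / sqrt (1 + (0/d)\<^sup>2)) (at_right 0)"
    using d by (intro tendsto_intros) auto
  moreover have "\<forall>\<^sub>F t in at_right 0. ?c / sqrt (1 + (t/d)\<^sup>2) \<le> ?S"
    using eventually_at_right_real[OF d] by eventually_elim (use lower in auto)
  ultimately show "?c \<le> ?S"
    using tendsto_le[OF trivial_limit_at_right_real tendsto_const] by fastforce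
qed

theorem theorem3p6:
  fixes G :: "'a::euclidean_space set"
  assumes "open G" and "connected G" and "G \<noteq> {}" and "G \<noteq> UNIV"
  shows "(\<forall>z1\<in>G. \<forall>z2\<in>G. \<forall>p r. 1 \<le> r \<and> r < p \<longrightarrow>
            b_fun G r z1 z2 \<le> b_fun G p z1 z2 \<and>
            b_fun G p z1 z2 \<le> 2 powr (1/r - 1/p) * b_fun G r z1 z2)
       \<and> (\<forall>z1\<in>G. \<forall>z2\<in>G. \<forall>p. 1 \<le> p \<longrightarrow>
            s_fun G z1 z2 \<le> b_fun G p z1 z2 \<and>
            b_fun G p z1 z2 \<le> 2 powr (1 - 1/p) * s_fun G z1 z2)
       \<and> (DIM('a) = 2 \<longrightarrow> (\<forall>p. 1 \<le> p \<longrightarrow>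
            (SUP zz\<in>G \<times> G. b_fun G p (fst zz) (snd zz)) = 2 powr (1 - 1/p)))"
proof -
  have comparison: "b_fun G r z1 z2 \<le> b_fun G p z1 z2 \<and>
      b_fun G p z1 z2 \<le> 2 powr (1/r - 1/p) * b_fun G r z1 z2"
    if "z1 \<in> G" "z2 \<in> G" "1 \<le> r" "r \<le> p" for z1 z2 r p
    using b_fun_mono[OF assms(1,4) that] b_fun_le_powr2[OF assms(1,4) that] by blast
  have sharpness: "(SUP zz\<in>G \<times> G. b_fun G p (fst zz) (snd zz)) = 2 powr (1 - 1/p)"
    if "DIM('a) = 2" "1 \<le> p" for p
    using that by (intro SUP_b_fun_eq_2_powr[OF assms(1,3,4)]) auto
  show ?thesis
    unfolding s_fun_def using comparison[of _ _ 1] comparison sharpness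
    by (auto simp: less_imp_le)
qed

end
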